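(* The metric space defined on the equivalence classes of polygonal curves in $\mathbb{X}_z^{d}$ that have pairwise discrete Fréchet distance $0$, equipped with the discrete Fréchet distance, has doubling dimension $\Theta(dz)$.
   Context: A polygonal curve of complexity $z$ in $\mathbb{R}^d$ is a sequence $\langle p_1,\dots,p_z\rangle$ of points of $\mathbb{R}^d$; $\mathbb{X}_z^d$ is the set of all such curves. A traversal between curves of complexities $z$ and $\ell$ is a sequence of index pairs $(i_1,j_1),\dots,(i_t,j_t)$ with $(i_1,j_1)=(1,1)$, $(i_t,j_t)=(z,\ell)$ and, for $r<t$, $i_{r+1}-i_r\in\{0,1\}$, $j_{r+1}-j_r\in\{0,1\}$, $(i_{r+1}-i_r)+(j_{r+1}-j_r)\ge1$; the discrete Fréchet distance is $\mathbf{d}_{dF}(\langle p_i\rangle,\langle q_j\rangle)=\min_T\max_{(i,j)\in T}\|p_i-q_j\|_2$ over all traversals $T$. The doubling dimension of a metric space is the smallest $t\ge0$ such that every ball can be covered by at most $2^t$ balls of half the radius. *)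

theory Defs
  imports "HOL-Analysis.Analysis"
begin

text \<open>Points of R^d are real lists of length d; curves are lists of points.
  Indices are 0-based.\<close>

definition euclid_dist :: "real list \<Rightarrow> real list \<Rightarrow> real" where
  "euclid_dist p q = sqrt (\<Sum>k<length p. (p ! k - q ! k)^2)"

definition curves :: "nat \<Rightarrow> nat \<Rightarrow> real list list set" where
  "curves d z = {P. length P = z \<and> (\<forall>p\<in>set P. length p = d)}"

definition is_traversal :: "nat \<Rightarrow> nat \<Rightarrow> (nat \<times> nat) list \<Rightarrow> bool" where
  "is_traversal z l T \<longleftrightarrow> T \<noteq> [] \<and> hd T = (0, 0) \<and> last T = (z - 1, l - 1) \<and>
     (\<forall>r. Suc r < length T \<longrightarrow>
        (let (i, j) = T ! r; (i', j') = T ! Suc r in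
          i \<le> i' \<and> i' \<le> Suc i \<and> j \<le> j' \<and> j' \<le> Suc j \<and> (i, j) \<noteq> (i', j')))"

definition dfrechet :: "real list list \<Rightarrow> real list list \<Rightarrow> real" where
  "dfrechet P Q = Min {Max {euclid_dist (P ! i) (Q ! j) | i j. (i, j) \<in> set T} | T.
                        is_traversal (length P) (length Q) T}"

definition frechet_classes :: "nat \<Rightarrow> nat \<Rightarrow> real list list set set" where
  "frechet_classes d z = {{Q \<in> curves d z. dfrechet P Q = 0} | P. P \<in> curves d z}"

definition class_dist :: "real list list set \<Rightarrow> real list list set \<Rightarrow> real" where
  "class_dist A B = dfrechet (SOME P. P \<in> A) (SOME Q. Q \<in> B)"

definition cball_in :: "'a set \<Rightarrow> ('a \<Rightarrow> 'a \<Rightarrow> real) \<Rightarrow> 'a \<Rightarrow> real \<Rightarrow> 'a set" where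
  "cball_in S \<delta> x r = {y \<in> S. \<delta> x y \<le> r}"

definition doubling_ok :: "'a set \<Rightarrow> ('a \<Rightarrow> 'a \<Rightarrow> real) \<Rightarrow> real \<Rightarrow> bool" where
  "doubling_ok S \<delta> t \<longleftrightarrow> (\<forall>x\<in>S. \<forall>r>0. \<exists>C. finite C \<and> C \<subseteq> S \<and> real (card C) \<le> 2 powr t \<and>
      cball_in S \<delta> x r \<subseteq> (\<Union>c\<in>C. cball_in S \<delta> c (r / 2)))"

definition doubling_dim :: "'a set \<Rightarrow> ('a \<Rightarrow> 'a \<Rightarrow> real) \<Rightarrow> ereal" where
  "doubling_dim S \<delta> = Inf (ereal ` {t. t \<ge> 0 \<and> doubling_ok S \<delta> t})"

end

theory Submission
  imports Defs
begin

text \<open>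
  Lower bound: the \<open>2\<^sup>d\<^sup>z\<close> curves whose \<open>i\<close>-th vertex is \<open>(10 i, 0, \<dots>, 0) + (\<plusminus>1/\<surd>d, \<dots>, \<plusminus>1/\<surd>d)\<close>
  all lie at distance \<open>1\<close> from the curve of the points \<open>(10 i, 0, \<dots>, 0)\<close>. Their vertices are so far
  apart that a curve within \<open>1/2\<close> of two of them must match them index by index, so at each
  index the two sign vectors differ in at most \<open>d/4\<close> places. A ball of radius \<open>1/2\<close> thus
  contains at most \<open>2\<^sup>7\<^sup>d\<^sup>z\<^sup>/\<^sup>8\<close> of them, and covering the unit ball needs \<open>2\<^sup>d\<^sup>z\<^sup>/\<^sup>8\<close> balls.

  Upper bound: an optimal traversal between \<open>P\<close> and a curve \<open>Q\<close> within distance \<open>r\<close> yields a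
  monotone map \<open>f\<close> with \<open>|P\<^sub>f\<^sub>(\<^sub>j\<^sub>) - Q\<^sub>j| \<le> r\<close>, and \<open>Q\<^sub>j - P\<^sub>f\<^sub>(\<^sub>j\<^sub>)\<close> can be rounded to within
  \<open>r/\<surd>8\<close> on one of \<open>56\<^sup>d\<close> adaptive grids. Hence \<open>Q\<close> lies within \<open>r/2\<close> of one of \<open>2\<^sup>9\<^sup>d\<^sup>z\<close> center
  curves \<open>j \<mapsto> P\<^sub>f\<^sub>(\<^sub>j\<^sub>) + g\<^sub>j\<close>. Since \<open>class_dist\<close> compares arbitrary representatives, the centers
  are perturbed so that consecutive vertices differ: then their classes are singletons.
\<close>

section \<open>Traversals\<close>

lemma is_traversal_step:
  assumes "is_traversal z l T" "Suc r < length T"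
  shows "fst (T!r) \<le> fst (T!Suc r) \<and> fst (T!Suc r) \<le> Suc (fst (T!r)) \<and>
         snd (T!r) \<le> snd (T!Suc r) \<and> snd (T!Suc r) \<le> Suc (snd (T!r)) \<and> T!r \<noteq> T!Suc r"
proof -
  have "let (i, j) = T ! r; (i', j') = T ! Suc r in
          i \<le> i' \<and> i' \<le> Suc i \<and> j \<le> j' \<and> j' \<le> Suc j \<and> (i, j) \<noteq> (i', j')"
    using assms unfolding is_traversal_def by blast
  then show ?thesis by (cases "T!r", cases "T!Suc r") (auto simp: Let_def)
qed

lemma is_traversal_first: "is_traversal z l T \<Longrightarrow> 0 < length T \<and> T ! 0 = (0, 0)"
  unfolding is_traversal_def by (auto simp: hd_conv_nth)

lemma is_traversal_last: "is_traversal z l T \<Longrightarrow> T ! (length T - 1) = (z - 1, l - 1)"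
  unfolding is_traversal_def by (auto simp: last_conv_nth)

lemma is_traversal_swap:
  assumes T: "is_traversal z l T"
  shows "is_traversal l z (map prod.swap T)"
  unfolding is_traversal_def
proof (intro conjI allI impI)
  show "map prod.swap T \<noteq> []" "hd (map prod.swap T) = (0, 0)" "last (map prod.swap T) = (l - 1, z - 1)"
    using T unfolding is_traversal_def by (auto simp: hd_map last_map)
  fix r assume "Suc r < length (map prod.swap T)"
  with is_traversal_step[OF T, of r]
  show "let (i, j) = map prod.swap T ! r; (i', j') = map prod.swap T ! Suc r in
      i \<le> i' \<and> i' \<le> Suc i \<and> j \<le> j' \<and> j' \<le> Suc j \<and> (i, j) \<noteq> (i', j')"
    by (cases "T!r", cases "T!Suc r") (auto simp: Let_def)
qed

lemma is_traversal_mono: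
  assumes T: "is_traversal z l T" and "r \<le> s" "s < length T"
  shows "fst (T!r) \<le> fst (T!s) \<and> snd (T!r) \<le> snd (T!s)"
  using assms(2,3)
proof (induction s rule: dec_induct)
  case (step s)
  then show ?case using is_traversal_step[OF T, of s] by auto
qed simp

lemma is_traversal_index_le_sum:
  assumes T: "is_traversal z l T" and "r < length T"
  shows "r \<le> fst (T!r) + snd (T!r)"
  using assms(2)
proof (induction r)
  case (Suc r)
  with is_traversal_step[OF T, of r] show ?case
    by (cases "T!r", cases "T!Suc r") auto
qed simp

lemma is_traversal_length_le:
  assumes T: "is_traversal z l T" and "0 < z" "0 < l"
  shows "length T \<le> z + l - 1"
  using is_traversal_index_le_sum[OF T, of "length T - 1"] is_traversal_first[OF T]
    is_traversal_last[OF T] assms(2,3) by auto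

lemma is_traversal_set_bounds:
  assumes T: "is_traversal z l T" and "(i, j) \<in> set T" "0 < z" "0 < l"
  shows "i < z \<and> j < l"
proof -
  obtain r where r: "r < length T" "T!r = (i, j)" using assms(2) by (auto simp: in_set_conv_nth)
  then have "fst (T!r) \<le> fst (T!(length T - 1)) \<and> snd (T!r) \<le> snd (T!(length T - 1))"
    by (intro is_traversal_mono[OF T]) auto
  then show ?thesis using r(2) is_traversal_last[OF T] assms(3,4) by auto
qed

lemma finite_traversals:
  assumes "0 < z" "0 < l"
  shows "finite {T. is_traversal z l T}"
proof (rule finite_subset)
  show "{T. is_traversal z l T} \<subseteq> {xs. set xs \<subseteq> {..<z} \<times> {..<l} \<and> length xs \<le> z + l - 1}"
    using is_traversal_set_bounds is_traversal_length_le assms by fastforce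
  show "finite {xs. set xs \<subseteq> {..<z} \<times> {..<l} \<and> length xs \<le> z + l - 1}"
    by (rule finite_lists_length_le) auto
qed

lemma is_traversal_fst_attains:
  assumes T: "is_traversal z l T" and "n < length T" "i \<le> fst (T!n)"
  shows "\<exists>r\<le>n. fst (T!r) = i"
proof -
  have "\<forall>r<n. \<bar>int (fst (T!(r + 1))) - int (fst (T!r))\<bar> \<le> 1"
  proof (intro allI impI)
    fix r assume "r < n"
    then have "Suc r < length T" using assms(2) by simp
    from is_traversal_step[OF T this] show "\<bar>int (fst (T!(r + 1))) - int (fst (T!r))\<bar> \<le> 1" by auto
  qed
  then have "\<exists>r\<le>n. int (fst (T!r)) = int i"
    using assms(3) is_traversal_first[OF T] by (intro nat0_intermed_int_val) auto
  then show ?thesis by simp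
qed

lemma is_traversal_snd_attains:
  assumes T: "is_traversal z l T" and "n < length T" "j \<le> snd (T!n)"
  shows "\<exists>r\<le>n. snd (T!r) = j"
  using is_traversal_fst_attains[OF is_traversal_swap[OF T], of n j] assms(2,3) by auto

lemma is_traversal_covers_fst:
  assumes T: "is_traversal z l T" and "i < z"
  shows "\<exists>j. (i, j) \<in> set T"
proof -
  have "length T - 1 < length T" using is_traversal_first[OF T] by simp
  moreover have "i \<le> fst (T!(length T - 1))" using is_traversal_last[OF T] assms(2) by simp
  ultimately obtain r where "r < length T" "fst (T!r) = i"
    using is_traversal_fst_attains[OF T] by (meson le_less_trans)
  then show ?thesis by (metis nth_mem prod.collapse)
qed

lemma is_traversal_covers_snd:
  assumes T: "is_traversal z l T" and "j < l"
  shows "\<exists>i. (i, j) \<in> set T"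
  using is_traversal_covers_fst[OF is_traversal_swap[OF T] assms(2)] by auto

lemma is_traversal_diagonal: "0 < z \<Longrightarrow> is_traversal z z (map (\<lambda>k. (k, k)) [0..<z])"
  unfolding is_traversal_def by (auto simp: hd_map last_map Let_def)

lemma is_traversal_staircase:
  assumes "0 < z" "0 < l"
  shows "is_traversal z l (map (\<lambda>k. (min k (z - 1), min k (l - 1))) [0..<max z l])"
  using assms unfolding is_traversal_def by (auto simp: hd_map last_map Let_def max_def)

lemma is_traversal_fst_le_add:
  assumes T: "is_traversal z l T" and "r \<le> s" "s < length T"
  shows "fst (T!s) \<le> fst (T!r) + (s - r)"
  using assms(2,3)
proof (induction s rule: dec_induct)
  case (step s)
  then show ?case using is_traversal_step[OF T, of s] by auto
qed simp

lemma is_traversal_diagonal_if_snd_increasing: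
  assumes T: "is_traversal z z T" and "0 < z"
    and incr: "\<And>r. Suc r < length T \<Longrightarrow> snd (T!r) < snd (T!Suc r)" and "r < length T"
  shows "T!r = (r, r)"
proof -
  have snd_eq: "snd (T!r) = r" if "r < length T" for r
    using that
  proof (induction r)
    case 0 then show ?case using is_traversal_first[OF T] by simp
  next
    case (Suc r) then show ?case using incr[of r] is_traversal_step[OF T, of r] by simp
  qed
  have "0 < length T" using is_traversal_first[OF T] by simp
  then have "length T - 1 = z - 1" using snd_eq[of "length T - 1"] is_traversal_last[OF T] by simp
  then have len: "length T = z" using \<open>0 < length T\<close> \<open>0 < z\<close> by linarith
  have "fst (T!r) \<le> r"
    using is_traversal_fst_le_add[OF T, of 0 r] is_traversal_first[OF T] assms(4) by simp
  moreover have "z - 1 \<le> fst (T!r) + (z - 1 - r)"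
    using is_traversal_fst_le_add[OF T, of r "length T - 1"] is_traversal_last[OF T] assms(4) len
    by simp
  ultimately have "fst (T!r) = r" using assms(4) len by linarith
  then show ?thesis using snd_eq[OF assms(4)] by (metis prod.collapse)
qed

section \<open>Discrete Frechet distance\<close>

lemma euclid_dist_eq_L2_set: "euclid_dist p q = L2_set (\<lambda>k. p!k - q!k) {..<length p}"
  unfolding euclid_dist_def L2_set_def by simp

lemma euclid_dist_nonneg: "0 \<le> euclid_dist p q"
  unfolding euclid_dist_def by (simp add: sum_nonneg)

lemma euclid_dist_self [simp]: "euclid_dist p p = 0"
  unfolding euclid_dist_def by simp

lemma euclid_dist_commute: "length p = length q \<Longrightarrow> euclid_dist p q = euclid_dist q p"
  unfolding euclid_dist_def by (simp add: power2_commute)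

lemma euclid_dist_triangle:
  assumes "length p = length q" "length q = length s"
  shows "euclid_dist p s \<le> euclid_dist p q + euclid_dist q s"
proof -
  have "euclid_dist p s = L2_set (\<lambda>k. (p!k - q!k) + (q!k - s!k)) {..<length p}"
    unfolding euclid_dist_eq_L2_set by simp
  also have "\<dots> \<le> L2_set (\<lambda>k. p!k - q!k) {..<length p} + L2_set (\<lambda>k. q!k - s!k) {..<length p}"
    by (rule L2_set_triangle_ineq)
  finally show ?thesis unfolding euclid_dist_eq_L2_set using assms by simp
qed

lemma abs_nth_diff_le_euclid_dist:
  assumes "k < length p"
  shows "\<bar>p!k - q!k\<bar> \<le> euclid_dist p q"
proof -
  have "\<bar>p!k - q!k\<bar> \<le> L2_set (\<lambda>k. \<bar>p!k - q!k\<bar>) {..<length p}"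
    using assms by (intro member_le_L2_set) auto
  then show ?thesis unfolding euclid_dist_eq_L2_set by (simp add: L2_set_def)
qed

lemma euclid_dist_eq_0_imp_eq:
  assumes "length p = length q" "euclid_dist p q = 0"
  shows "p = q"
  using assms by (intro nth_equalityI) (auto simp: euclid_dist_eq_L2_set L2_set_eq_0_iff)

definition traversal_cost :: "real list list \<Rightarrow> real list list \<Rightarrow> (nat \<times> nat) list \<Rightarrow> real" where
  "traversal_cost P Q T = Max ((\<lambda>(i, j). euclid_dist (P!i) (Q!j)) ` set T)"

lemma dfrechet_eq_Min_traversal_cost:
  "dfrechet P Q = Min (traversal_cost P Q ` {T. is_traversal (length P) (length Q) T})"
proof -
  have "{euclid_dist (P!i) (Q!j) | i j. (i, j) \<in> set T} = (\<lambda>(i, j). euclid_dist (P!i) (Q!j)) ` set T"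
    for T by force
  then show ?thesis unfolding dfrechet_def traversal_cost_def
    by (simp add: image_def setcompr_eq_image)
qed

lemma traversal_cost_le_iff:
  assumes "is_traversal z l T"
  shows "traversal_cost P Q T \<le> c \<longleftrightarrow> (\<forall>(i, j)\<in>set T. euclid_dist (P!i) (Q!j) \<le> c)"
  using is_traversal_first[OF assms] unfolding traversal_cost_def by (subst Max_le_iff) auto

lemma dfrechet_attained:
  assumes "P \<noteq> []" "Q \<noteq> []"
  shows "\<exists>T. is_traversal (length P) (length Q) T \<and> dfrechet P Q = traversal_cost P Q T"
proof -
  let ?C = "traversal_cost P Q ` {T. is_traversal (length P) (length Q) T}"
  have "finite ?C" using finite_traversals assms by simp
  moreover have "?C \<noteq> {}" using is_traversal_staircase[of "length P" "length Q"] assms by auto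
  ultimately have "Min ?C \<in> ?C" by (rule Min_in)
  then show ?thesis unfolding dfrechet_eq_Min_traversal_cost by auto
qed

lemma dfrechet_le_iff:
  assumes "P \<noteq> []" "Q \<noteq> []"
  shows "dfrechet P Q \<le> c \<longleftrightarrow>
    (\<exists>T. is_traversal (length P) (length Q) T \<and> (\<forall>(i, j)\<in>set T. euclid_dist (P!i) (Q!j) \<le> c))"
proof
  assume "dfrechet P Q \<le> c"
  then show "\<exists>T. is_traversal (length P) (length Q) T \<and> (\<forall>(i, j)\<in>set T. euclid_dist (P!i) (Q!j) \<le> c)"
    using dfrechet_attained[OF assms] traversal_cost_le_iff by metis
next
  assume "\<exists>T. is_traversal (length P) (length Q) T \<and> (\<forall>(i, j)\<in>set T. euclid_dist (P!i) (Q!j) \<le> c)"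
  then obtain T where T: "is_traversal (length P) (length Q) T" "traversal_cost P Q T \<le> c"
    using traversal_cost_le_iff by blast
  have "dfrechet P Q \<le> traversal_cost P Q T"
    unfolding dfrechet_eq_Min_traversal_cost using T(1) finite_traversals assms by (intro Min_le) auto
  with T(2) show "dfrechet P Q \<le> c" by simp
qed

lemma dfrechet_le_imp_near_vertex_fst:
  assumes "P \<noteq> []" "Q \<noteq> []" "dfrechet P Q \<le> c" "i < length P"
  shows "\<exists>j < length Q. euclid_dist (P!i) (Q!j) \<le> c"
proof -
  obtain T where T: "is_traversal (length P) (length Q) T"
    and cost: "\<forall>(i, j)\<in>set T. euclid_dist (P!i) (Q!j) \<le> c"
    using assms(1-3) dfrechet_le_iff by blast
  obtain j where "(i, j) \<in> set T" using is_traversal_covers_fst[OF T assms(4)] by blast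
  moreover from this have "j < length Q" using is_traversal_set_bounds[OF T] assms(1,2) by blast
  ultimately show ?thesis using cost by blast
qed

lemma dfrechet_le_imp_near_vertex_snd:
  assumes "P \<noteq> []" "Q \<noteq> []" "dfrechet P Q \<le> c" "j < length Q"
  shows "\<exists>i < length P. euclid_dist (P!i) (Q!j) \<le> c"
proof -
  obtain T where T: "is_traversal (length P) (length Q) T"
    and cost: "\<forall>(i, j)\<in>set T. euclid_dist (P!i) (Q!j) \<le> c"
    using assms(1-3) dfrechet_le_iff by blast
  obtain i where "(i, j) \<in> set T" using is_traversal_covers_snd[OF T assms(4)] by blast
  moreover from this have "i < length P" using is_traversal_set_bounds[OF T] assms(1,2) by blast
  ultimately show ?thesis using cost by blast
qed

lemma dfrechet_nonneg:
  assumes "P \<noteq> []" "Q \<noteq> []"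
  shows "0 \<le> dfrechet P Q"
proof -
  obtain T where T: "is_traversal (length P) (length Q) T" "dfrechet P Q = traversal_cost P Q T"
    using dfrechet_attained[OF assms] by blast
  have "(0, 0) \<in> set T" using is_traversal_first[OF T(1)] nth_mem by metis
  then have "euclid_dist (P!0) (Q!0) \<le> traversal_cost P Q T"
    unfolding traversal_cost_def by (intro Max_ge) force+
  then show ?thesis using T(2) euclid_dist_nonneg order_trans by metis
qed

lemma dfrechet_le_pointwise:
  assumes "length Q = length P" "P \<noteq> []" "\<And>i. i < length P \<Longrightarrow> euclid_dist (P!i) (Q!i) \<le> c"
  shows "dfrechet P Q \<le> c"
proof -
  let ?T = "map (\<lambda>k. (k, k)) [0..<length P]"
  have "is_traversal (length P) (length Q) ?T"
    using is_traversal_diagonal[of "length P"] assms(1,2) by simp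
  moreover have "\<forall>(i, j)\<in>set ?T. euclid_dist (P!i) (Q!j) \<le> c" using assms(3) by auto
  moreover have "Q \<noteq> []" using assms(1,2) by auto
  ultimately show ?thesis using dfrechet_le_iff[OF assms(2)] by blast
qed

lemma dfrechet_self [simp]: "P \<noteq> [] \<Longrightarrow> dfrechet P P = 0"
  using dfrechet_le_pointwise[of P P 0] dfrechet_nonneg[of P P] by simp

section \<open>Classes of curves at distance zero\<close>

lemma curves_length: "P \<in> curves d z \<Longrightarrow> length P = z"
  unfolding curves_def by simp

lemma curves_nth_length: "P \<in> curves d z \<Longrightarrow> i < z \<Longrightarrow> length (P!i) = d"
  unfolding curves_def by auto

lemma curves_nonempty: "P \<in> curves d z \<Longrightarrow> 0 < z \<Longrightarrow> P \<noteq> []"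
  using curves_length by fastforce

definition frechet_class :: "nat \<Rightarrow> nat \<Rightarrow> real list list \<Rightarrow> real list list set" where
  "frechet_class d z P = {Q \<in> curves d z. dfrechet P Q = 0}"

lemma frechet_class_in_frechet_classes: "P \<in> curves d z \<Longrightarrow> frechet_class d z P \<in> frechet_classes d z"
  unfolding frechet_class_def frechet_classes_def by auto

lemma frechet_classes_representative:
  assumes "c \<in> frechet_classes d z" "0 < z"
  shows "(SOME P. P \<in> c) \<in> curves d z"
proof -
  obtain P where P: "P \<in> curves d z" "c = frechet_class d z P"
    using assms(1) unfolding frechet_classes_def frechet_class_def by auto
  have "P \<in> c" using P curves_nonempty[OF P(1) assms(2)] unfolding frechet_class_def by simp
  then have "(SOME P. P \<in> c) \<in> c" by (rule someI)
  then show ?thesis using P(2) unfolding frechet_class_def by simp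
qed

text \<open>If consecutive vertices of \<open>W\<close> differ, a zero-cost traversal can never advance on \<open>W\<close>
  alone, so it is the diagonal and the other curve is \<open>W\<close> itself.\<close>

lemma frechet_class_eq_singleton:
  assumes W: "W \<in> curves d z" and "0 < z" and distinct: "\<And>j. Suc j < z \<Longrightarrow> W!j \<noteq> W!Suc j"
  shows "frechet_class d z W = {W}"
proof -
  have "Q = W" if Q: "Q \<in> curves d z" "dfrechet W Q = 0" for Q
  proof -
    have len: "length W = z" "length Q = z" using W Q(1) curves_length by auto
    have "W \<noteq> []" "Q \<noteq> []" using W Q(1) \<open>0 < z\<close> curves_nonempty by auto
    then obtain T where T: "is_traversal z z T" and T0: "\<forall>(i, j)\<in>set T. euclid_dist (W!i) (Q!j) \<le> 0"
      using dfrechet_le_iff[of W Q 0] Q(2) len by auto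
    have bounds: "i < z \<and> j < z" if "(i, j) \<in> set T" for i j
      using is_traversal_set_bounds[OF T that] \<open>0 < z\<close> by simp
    have eq: "W!i = Q!j" if "(i, j) \<in> set T" for i j
      using T0 that bounds[OF that] euclid_dist_nonneg[of "W!i" "Q!j"] curves_nth_length[OF W]
        curves_nth_length[OF Q(1)]
      by (intro euclid_dist_eq_0_imp_eq) fastforce+
    have incr: "snd (T!r) < snd (T!Suc r)" if r: "Suc r < length T" for r
    proof (rule ccontr)
      assume "\<not> snd (T!r) < snd (T!Suc r)"
      then have "T!Suc r = (Suc (fst (T!r)), snd (T!r))"
        using is_traversal_step[OF T r] by (cases "T!r", cases "T!Suc r") auto
      moreover have "T!r \<in> set T" "T!Suc r \<in> set T" using r by auto
      ultimately show False
        using eq[of "fst (T!r)" "snd (T!r)"] eq[of "Suc (fst (T!r))" "snd (T!r)"]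
          distinct[of "fst (T!r)"] bounds[of "Suc (fst (T!r))" "snd (T!r)"] by simp
    qed
    have "W!k = Q!k" if k: "k < z" for k
    proof -
      obtain j where "(k, j) \<in> set T" using is_traversal_covers_fst[OF T k] by blast
      then obtain r where "r < length T" "T!r = (k, j)" by (auto simp: in_set_conv_nth)
      then have "(k, k) \<in> set T"
        using is_traversal_diagonal_if_snd_increasing[OF T \<open>0 < z\<close> incr] by (metis nth_mem fst_conv)
      then show ?thesis by (rule eq)
    qed
    then show "Q = W" using len by (intro nth_equalityI) auto
  qed
  moreover have "dfrechet W W = 0" using curves_nonempty[OF W \<open>0 < z\<close>] by simp
  ultimately show ?thesis using W unfolding frechet_class_def by auto
qed

section \<open>Hamming balls\<close>

definition hamming :: "nat \<Rightarrow> (nat \<Rightarrow> bool) \<Rightarrow> (nat \<Rightarrow> bool) \<Rightarrow> nat" where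
  "hamming d x y = card {k\<in>{..<d}. x k \<noteq> y k}"

definition hamming_ball :: "nat \<Rightarrow> (nat \<Rightarrow> bool) \<Rightarrow> nat \<Rightarrow> (nat \<Rightarrow> bool) set" where
  "hamming_ball d x m = {y \<in> {..<d} \<rightarrow>\<^sub>E UNIV. hamming d x y \<le> m}"

lemma finite_hamming_ball: "finite (hamming_ball d x m)"
  unfolding hamming_ball_def by (rule finite_subset[of _ "{..<d} \<rightarrow>\<^sub>E UNIV"]) (auto intro: finite_PiE)

lemma sum_binomial_mult_power_le:
  fixes x :: real
  assumes "0 \<le> x" "x \<le> 1"
  shows "(\<Sum>k\<le>m. real (d choose k)) * x^m \<le> (1 + x)^d"
proof -
  have "(\<Sum>k\<le>m. real (d choose k)) * x^m \<le> (\<Sum>k\<le>m. real (d choose k) * x^k)"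
    unfolding sum_distrib_right using assms by (intro sum_mono mult_left_mono power_decreasing) auto
  also have "\<dots> \<le> (\<Sum>k\<le>max m d. real (d choose k) * x^k)"
    using assms by (intro sum_mono2) auto
  also have "\<dots> = (\<Sum>k\<le>d. real (d choose k) * x^k)"
    by (intro sum.mono_neutral_right) auto
  also have "\<dots> = (x + 1)^d"
    by (simp add: binomial_ring)
  finally show ?thesis by (simp add: add.commute)
qed

lemma card_hamming_ball_le: "card (hamming_ball d x m) \<le> (\<Sum>k\<le>m. d choose k)"
proof -
  let ?diff = "\<lambda>y. {k\<in>{..<d}. x k \<noteq> y k}"
  let ?S = "\<lambda>k. {B. B \<subseteq> {..<d} \<and> card B = k}"
  have "inj_on ?diff (hamming_ball d x m)"
  proof
    fix y y' assume y: "y \<in> hamming_ball d x m" and y': "y' \<in> hamming_ball d x m"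
      and eq: "?diff y = ?diff y'"
    have "y k = y' k" if "k \<in> {..<d}" for k
    proof -
      have "k \<in> ?diff y \<longleftrightarrow> k \<in> ?diff y'" using eq by simp
      then show ?thesis using that by auto
    qed
    then show "y = y'" using y y' unfolding hamming_ball_def by (intro PiE_ext) auto
  qed
  then have "card (hamming_ball d x m) = card (?diff ` hamming_ball d x m)" by (simp add: card_image)
  also have "\<dots> \<le> card (\<Union>k\<le>m. ?S k)"
  proof (rule card_mono)
    show "finite (\<Union>k\<le>m. ?S k)" by (auto intro: finite_subset[of _ "Pow {..<d}"])
    show "?diff ` hamming_ball d x m \<subseteq> (\<Union>k\<le>m. ?S k)"
      unfolding hamming_ball_def hamming_def by auto
  qed
  also have "\<dots> \<le> (\<Sum>k\<le>m. card (?S k))" by (rule card_UN_le) simp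
  also have "\<dots> = (\<Sum>k\<le>m. d choose k)" by (simp add: n_subsets)
  finally show ?thesis .
qed

text \<open>Via \<open>x = 1/3\<close> in the binomial estimate: \<open>(3\<^sup>1\<^sup>/\<^sup>4 \<cdot> 4/3)\<^sup>8 = 65536/729 \<le> 2\<^sup>7\<close>.\<close>

lemma card_hamming_ball_quarter_le: "real (card (hamming_ball d x (d div 4))) \<le> 2 powr (7/8 * d)"
proof -
  let ?B = "real (card (hamming_ball d x (d div 4)))"
  have "?B \<le> (\<Sum>k\<le>d div 4. real (d choose k))"
    using card_hamming_ball_le[of d x "d div 4"] by (metis of_nat_le_iff of_nat_sum)
  then have "?B * (1/3)^(d div 4) \<le> (\<Sum>k\<le>d div 4. real (d choose k)) * (1/3)^(d div 4)"
    by (intro mult_right_mono) auto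
  also have "\<dots> \<le> (4/3)^d"
    using sum_binomial_mult_power_le[where x = "1/3" and m = "d div 4" and d = d] by simp
  finally have "?B * (1/3)^(d div 4) \<le> (4/3)^d" .
  then have "?B \<le> 3^(d div 4) * (4/3)^d" by (simp add: power_one_over field_simps)
  then have "?B^8 \<le> (3^(d div 4) * (4/3)^d)^8" by (intro power_mono) auto
  also have "\<dots> = 3^(4 * (d div 4) * 2) * ((4/3)^8)^d"
    by (simp add: power_mult_distrib power_mult[symmetric] ac_simps)
  also have "\<dots> \<le> 3^(2 * d) * ((4/3)^8)^d"
    by (intro mult_right_mono power_increasing) auto
  also have "\<dots> = (9 * (4/3)^8)^d" by (simp add: power_mult power_mult_distrib)
  also have "\<dots> \<le> 2^(7 * d)" unfolding power_mult by (intro power_mono) (simp_all add: power_divide)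
  also have "\<dots> = (2 powr (7/8 * d))^8"
    by (simp add: powr_realpow[symmetric] powr_powr)
  finally have "?B^8 \<le> (2 powr (7/8 * d))^8" .
  then show ?thesis using power_mono_iff[of ?B "2 powr (7/8 * d)" 8] by simp
qed

section \<open>The lower bound\<close>

definition sign_coord :: "nat \<Rightarrow> bool \<Rightarrow> real" where
  "sign_coord d b = (if b then 1 else -1) / sqrt (real d)"

definition signed_point :: "nat \<Rightarrow> nat \<Rightarrow> (nat \<Rightarrow> bool) \<Rightarrow> real list" where
  "signed_point d i s = map (\<lambda>k. (if k = 0 then 10 * real i else 0) + sign_coord d (s k)) [0..<d]"

definition signed_curve :: "nat \<Rightarrow> nat \<Rightarrow> (nat \<Rightarrow> nat \<Rightarrow> bool) \<Rightarrow> real list list" where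
  "signed_curve d z \<sigma> = map (\<lambda>i. signed_point d i (\<sigma> i)) [0..<z]"

definition spine_curve :: "nat \<Rightarrow> nat \<Rightarrow> real list list" where
  "spine_curve d z = map (\<lambda>i. map (\<lambda>k. if k = 0 then 10 * real i else 0) [0..<d]) [0..<z]"

definition sign_patterns :: "nat \<Rightarrow> nat \<Rightarrow> (nat \<Rightarrow> nat \<Rightarrow> bool) set" where
  "sign_patterns d z = {..<z} \<rightarrow>\<^sub>E ({..<d} \<rightarrow>\<^sub>E UNIV)"

lemma signed_curve_in_curves: "signed_curve d z \<sigma> \<in> curves d z"
  unfolding signed_curve_def signed_point_def curves_def by auto

lemma spine_curve_in_curves: "spine_curve d z \<in> curves d z"
  unfolding spine_curve_def curves_def by auto

lemma spine_curve_consecutive_distinct: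
  assumes "0 < d" "Suc j < z"
  shows "spine_curve d z ! j \<noteq> spine_curve d z ! Suc j"
proof
  assume "spine_curve d z ! j = spine_curve d z ! Suc j"
  then have "spine_curve d z ! j ! 0 = spine_curve d z ! Suc j ! 0" by simp
  then show False using assms unfolding spine_curve_def by simp
qed

lemma signed_point_far:
  assumes "0 < d" "i \<noteq> j"
  shows "1 < euclid_dist (signed_point d i s) (signed_point d j t)"
proof -
  have coord0: "signed_point d i s ! 0 = 10 * real i + sign_coord d (s 0)" for i s
    using assms(1) unfolding signed_point_def by simp
  have "\<bar>sign_coord d b\<bar> \<le> 1" for b
    using assms(1) unfolding sign_coord_def by (auto simp: divide_le_eq)
  moreover have "10 \<le> \<bar>10 * real i - 10 * real j\<bar>" using assms(2) by (cases "i < j") auto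
  ultimately have "1 < \<bar>signed_point d i s ! 0 - signed_point d j t ! 0\<bar>"
    unfolding coord0 by (smt (verit))
  also have "\<dots> \<le> euclid_dist (signed_point d i s) (signed_point d j t)"
    using assms(1) by (intro abs_nth_diff_le_euclid_dist) (simp add: signed_point_def)
  finally show ?thesis .
qed

lemma signed_curve_consecutive_distinct:
  assumes "0 < d" "Suc j < z"
  shows "signed_curve d z \<sigma> ! j \<noteq> signed_curve d z \<sigma> ! Suc j"
  using signed_point_far[OF assms(1), of j "Suc j" "\<sigma> j" "\<sigma> (Suc j)"] assms(2)
  unfolding signed_curve_def by auto

lemma sign_coord_squared: "0 < d \<Longrightarrow> (sign_coord d b)^2 = 1 / real d"
  unfolding sign_coord_def by (simp add: power_divide)

lemma euclid_dist_spine_signed: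
  assumes "0 < d" "i < z"
  shows "euclid_dist (spine_curve d z ! i) (signed_curve d z \<sigma> ! i) = 1"
  using assms unfolding euclid_dist_def spine_curve_def signed_curve_def signed_point_def
  by (simp add: sign_coord_squared)

lemma euclid_dist_signed_point_squared:
  assumes "0 < d"
  shows "(euclid_dist (signed_point d i s) (signed_point d i t))^2 = 4 * real (hamming d s t) / real d"
proof -
  have "(euclid_dist (signed_point d i s) (signed_point d i t))^2
      = (\<Sum>k<d. (sign_coord d (s k) - sign_coord d (t k))^2)"
    unfolding euclid_dist_def signed_point_def by (simp add: sum_nonneg)
  also have "\<dots> = (\<Sum>k<d. if s k \<noteq> t k then 4 / real d else 0)"
    using assms unfolding sign_coord_def by (intro sum.cong) (auto simp: power2_eq_square field_simps)
  also have "\<dots> = 4 * real (hamming d s t) / real d"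
    unfolding hamming_def by (simp add: sum.If_cases Int_def conj_commute)
  finally show ?thesis .
qed

text \<open>A vertex of \<open>W\<close> is within \<open>1/2\<close> of the \<open>i\<close>-th vertex of one signed curve and of some vertex of
  the other, which must then also be the \<open>i\<close>-th since vertices with different indices are more
  than \<open>1\<close> apart.\<close>

lemma hamming_le_if_near_common_curve:
  assumes "0 < d" and W: "W \<in> curves d z" and "i < z"
    and near_\<sigma>: "dfrechet W (signed_curve d z \<sigma>) \<le> 1/2"
    and near_\<tau>: "dfrechet W (signed_curve d z \<tau>) \<le> 1/2"
  shows "hamming d (\<sigma> i) (\<tau> i) \<le> d div 4"
proof -
  have "0 < z" using \<open>i < z\<close> by simp
  have len: "length W = z" "length (signed_curve d z \<rho>) = z" for \<rho>
    using curves_length[OF W] curves_length[OF signed_curve_in_curves] by auto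
  have ne: "W \<noteq> []" "signed_curve d z \<rho> \<noteq> []" for \<rho>
    using curves_nonempty[OF W \<open>0 < z\<close>] curves_nonempty[OF signed_curve_in_curves \<open>0 < z\<close>]
    by auto
  obtain a where "a < z" and a: "euclid_dist (W!a) (signed_curve d z \<sigma> ! i) \<le> 1/2"
    using dfrechet_le_imp_near_vertex_snd[OF ne near_\<sigma>] \<open>i < z\<close> len by auto
  obtain j where "j < z" and j: "euclid_dist (W!a) (signed_curve d z \<tau> ! j) \<le> 1/2"
    using dfrechet_le_imp_near_vertex_fst[OF ne near_\<tau>] \<open>a < z\<close> len by auto
  let ?p = "signed_point d i (\<sigma> i)" and ?q = "signed_point d j (\<tau> j)"
  have p: "signed_curve d z \<sigma> ! i = ?p" and q: "signed_curve d z \<tau> ! j = ?q"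
    using \<open>i < z\<close> \<open>j < z\<close> unfolding signed_curve_def by auto
  have lengths: "length ?p = d" "length (W!a) = d" "length ?q = d"
    using curves_nth_length[OF W \<open>a < z\<close>] unfolding signed_point_def by auto
  have "euclid_dist ?p ?q \<le> euclid_dist ?p (W!a) + euclid_dist (W!a) ?q"
    using lengths by (intro euclid_dist_triangle) auto
  also have "\<dots> = euclid_dist (W!a) ?p + euclid_dist (W!a) ?q"
    using lengths euclid_dist_commute by metis
  also have "\<dots> \<le> 1" using a j p q by simp
  finally have close: "euclid_dist ?p ?q \<le> 1" .
  then have "j = i" using signed_point_far[OF \<open>0 < d\<close>, of i j "\<sigma> i" "\<tau> j"] by fastforce
  then have "4 * real (hamming d (\<sigma> i) (\<tau> i)) / real d \<le> 1"
    using close euclid_dist_nonneg euclid_dist_signed_point_squared[OF \<open>0 < d\<close>]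
    by (metis power_le_one)
  then show ?thesis using \<open>0 < d\<close> by (simp add: divide_le_eq)
qed

lemma frechet_class_spine_curve:
  "0 < d \<Longrightarrow> 0 < z \<Longrightarrow> frechet_class d z (spine_curve d z) = {spine_curve d z}"
  using frechet_class_eq_singleton[OF spine_curve_in_curves] spine_curve_consecutive_distinct by blast

lemma frechet_class_signed_curve:
  "0 < d \<Longrightarrow> 0 < z \<Longrightarrow> frechet_class d z (signed_curve d z \<sigma>) = {signed_curve d z \<sigma>}"
  using frechet_class_eq_singleton[OF signed_curve_in_curves] signed_curve_consecutive_distinct by blast

lemma dfrechet_spine_signed_le:
  assumes "0 < d" "0 < z"
  shows "dfrechet (spine_curve d z) (signed_curve d z \<sigma>) \<le> 1"
  using euclid_dist_spine_signed[OF assms(1)] curves_nonempty[OF spine_curve_in_curves assms(2)]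
    curves_length[OF spine_curve_in_curves] curves_length[OF signed_curve_in_curves]
  by (intro dfrechet_le_pointwise) auto

lemma card_le_card_mult_if_covered:
  fixes K :: real
  assumes "finite A" "finite C" "A \<subseteq> (\<Union>c\<in>C. N c)"
    and "\<And>c. c \<in> C \<Longrightarrow> real (card (A \<inter> N c)) \<le> K"
  shows "real (card A) \<le> real (card C) * K"
proof -
  have "card A = card (\<Union>c\<in>C. A \<inter> N c)" using assms(3) by (metis Int_UN_distrib inf.absorb1)
  also have "\<dots> \<le> (\<Sum>c\<in>C. card (A \<inter> N c))" by (rule card_UN_le[OF assms(2)])
  finally have "real (card A) \<le> (\<Sum>c\<in>C. real (card (A \<inter> N c)))"
    by (simp only: of_nat_le_iff of_nat_sum[symmetric])
  also have "\<dots> \<le> (\<Sum>c\<in>C. K)" using assms(4) by (rule sum_mono)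
  finally show ?thesis by simp
qed

lemma card_sign_patterns: "card (sign_patterns d z) = 2 ^ (d * z)"
  unfolding sign_patterns_def by (simp add: card_PiE power_mult)

lemma card_sign_patterns_near_le:
  assumes "0 < d" and W: "W \<in> curves d z"
  shows "real (card {\<sigma> \<in> sign_patterns d z. dfrechet W (signed_curve d z \<sigma>) \<le> 1/2})
    \<le> 2 powr (7/8 * d * z)"
proof -
  let ?N = "{\<sigma> \<in> sign_patterns d z. dfrechet W (signed_curve d z \<sigma>) \<le> 1/2}"
  show ?thesis
  proof (cases "?N = {}")
    case True
    then show ?thesis by (simp only: card.empty of_nat_0) simp
  next
    case False
    then obtain \<sigma>\<^sub>0 where \<sigma>\<^sub>0: "\<sigma>\<^sub>0 \<in> sign_patterns d z" "dfrechet W (signed_curve d z \<sigma>\<^sub>0) \<le> 1/2"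
      by blast
    let ?H = "\<lambda>i. hamming_ball d (\<sigma>\<^sub>0 i) (d div 4)"
    have "?N \<subseteq> Pi\<^sub>E {..<z} ?H"
    proof
      fix \<sigma> assume \<sigma>: "\<sigma> \<in> ?N"
      then have "hamming d (\<sigma>\<^sub>0 i) (\<sigma> i) \<le> d div 4" if "i < z" for i
        using hamming_le_if_near_common_curve[OF \<open>0 < d\<close> W that \<sigma>\<^sub>0(2)] by simp
      with \<sigma> show "\<sigma> \<in> Pi\<^sub>E {..<z} ?H"
        unfolding sign_patterns_def hamming_ball_def by (auto simp: PiE_iff)
    qed
    then have "card ?N \<le> card (Pi\<^sub>E {..<z} ?H)"
      by (intro card_mono finite_PiE finite_hamming_ball) auto
    also have "\<dots> = (\<Prod>i<z. card (?H i))" by (simp add: card_PiE)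
    finally have "real (card ?N) \<le> (\<Prod>i<z. real (card (?H i)))"
      by (simp only: of_nat_le_iff of_nat_prod[symmetric])
    also have "\<dots> \<le> (\<Prod>i<z. 2 powr (7/8 * d))"
      by (intro prod_mono conjI of_nat_0_le_iff card_hamming_ball_quarter_le)
    also have "\<dots> = (2 powr (7/8 * d)) powr real z"
      by (simp add: powr_realpow)
    also have "\<dots> = 2 powr (7/8 * d * z)"
      by (simp add: powr_powr)
    finally show ?thesis .
  qed
qed

lemma doubling_ok_frechet_classes_imp_ge:
  assumes "0 < d" "0 < z" and ok: "doubling_ok (frechet_classes d z) class_dist t"
  shows "real d * real z / 8 \<le> t"
proof -
  let ?S = "frechet_classes d z"
  let ?near = "\<lambda>c. {\<sigma>. dfrechet (SOME P. P \<in> c) (signed_curve d z \<sigma>) \<le> 1/2}"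
  obtain C where C: "finite C" "C \<subseteq> ?S" "real (card C) \<le> 2 powr t"
      "cball_in ?S class_dist {spine_curve d z} 1 \<subseteq> (\<Union>c\<in>C. cball_in ?S class_dist c (1/2))"
    using ok frechet_class_in_frechet_classes[OF spine_curve_in_curves]
      frechet_class_spine_curve[OF assms(1,2)]
    unfolding doubling_ok_def by (metis zero_less_one)
  have cover: "\<sigma> \<in> (\<Union>c\<in>C. ?near c)" for \<sigma>
  proof -
    have "{signed_curve d z \<sigma>} \<in> ?S"
      using frechet_class_in_frechet_classes[OF signed_curve_in_curves]
        frechet_class_signed_curve[OF assms(1,2)] by metis
    with dfrechet_spine_signed_le[OF assms(1,2)]
    have "{signed_curve d z \<sigma>} \<in> cball_in ?S class_dist {spine_curve d z} 1"
      unfolding cball_in_def class_dist_def by simp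
    then obtain c where "c \<in> C" "class_dist c {signed_curve d z \<sigma>} \<le> 1/2"
      using C(4) unfolding cball_in_def by blast
    then show ?thesis unfolding class_dist_def by auto
  qed
  have "2 powr (real d * real z) = real (card (sign_patterns d z))"
    using powr_realpow[of 2 "d * z"] by (simp add: card_sign_patterns)
  also have "\<dots> \<le> real (card C) * 2 powr (7/8 * d * z)"
  proof (rule card_le_card_mult_if_covered[OF _ C(1) subsetI[OF cover]])
    show "finite (sign_patterns d z)" unfolding sign_patterns_def by (intro finite_PiE) auto
    fix c assume "c \<in> C"
    then have "(SOME P. P \<in> c) \<in> curves d z" using frechet_classes_representative C(2) \<open>0 < z\<close> by blast
    from card_sign_patterns_near_le[OF \<open>0 < d\<close> this]
    show "real (card (sign_patterns d z \<inter> ?near c)) \<le> 2 powr (7/8 * d * z)" by (simp add: Int_def)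
  qed
  also have "\<dots> \<le> 2 powr t * 2 powr (7/8 * d * z)"
    using C(3) by (simp add: mult_right_mono)
  also have "\<dots> = 2 powr (t + 7/8 * d * z)" by (simp add: powr_add)
  finally show ?thesis by simp
qed

section \<open>Counting monotone maps and budgets\<close>

lemma strict_mono_on_lessThan_eq_if_image_eq:
  fixes g h :: "nat \<Rightarrow> 'a::linorder"
  assumes "strict_mono_on {..<n} g" "strict_mono_on {..<n} h" "g ` {..<n} = h ` {..<n}" "k < n"
  shows "g k = h k"
proof -
  have sorted: "sorted (map f [0..<n]) \<and> distinct (map f [0..<n])" if "strict_mono_on {..<n} f"
    for f :: "nat \<Rightarrow> 'a"
  proof -
    have "sorted_wrt (\<lambda>x y. f x < f y) [0..<n]"
      by (intro sorted_wrt_mono_rel[OF _ sorted_wrt_upt]) (auto intro: strict_mono_onD[OF that])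
    then have "sorted_wrt (<) (map f [0..<n])" by (simp add: sorted_wrt_map)
    then show ?thesis by (simp add: strict_sorted_iff)
  qed
  have "map g [0..<n] = map h [0..<n]"
    using sorted[OF assms(1)] sorted[OF assms(2)] assms(3)
    by (intro sorted_distinct_set_unique) (simp_all add: atLeast0LessThan)
  then show ?thesis using assms(4) by simp
qed

definition mono_maps :: "nat \<Rightarrow> (nat \<Rightarrow> nat) set" where
  "mono_maps z = {f \<in> {..<z} \<rightarrow>\<^sub>E {..<z}. mono_on {..<z} f}"

lemma finite_mono_maps: "finite (mono_maps z)"
  unfolding mono_maps_def by (rule finite_subset[of _ "{..<z} \<rightarrow>\<^sub>E {..<z}"]) (auto intro: finite_PiE)

lemma card_mono_maps_le: "card (mono_maps z) \<le> 4 ^ z"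
proof -
  let ?code = "\<lambda>f. (\<lambda>j. f j + j) ` {..<z}"
  have strict: "strict_mono_on {..<z} (\<lambda>j. f j + j)" if "f \<in> mono_maps z" for f
  proof (rule strict_mono_onI)
    fix i j assume "i \<in> {..<z}" "j \<in> {..<z}" "i < j"
    moreover have "mono_on {..<z} f" using that unfolding mono_maps_def by simp
    ultimately have "f i \<le> f j" by (auto intro: mono_onD)
    with \<open>i < j\<close> show "f i + i < f j + j" by simp
  qed
  have "inj_on ?code (mono_maps z)"
  proof
    fix f f' assume f: "f \<in> mono_maps z" and f': "f' \<in> mono_maps z" and eq: "?code f = ?code f'"
    have "f j = f' j" if "j \<in> {..<z}" for j
      using strict_mono_on_lessThan_eq_if_image_eq[OF strict[OF f] strict[OF f'] eq] that by simp
    then show "f = f'" using f f' unfolding mono_maps_def by (auto intro!: PiE_ext[of f "{..<z}" _ f'])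
  qed
  moreover have "?code ` mono_maps z \<subseteq> Pow {..<2 * z}"
  proof clarify
    fix f j assume "f \<in> mono_maps z" "j < z"
    then have "f j < z" unfolding mono_maps_def by auto
    with \<open>j < z\<close> show "f j + j < 2 * z" by simp
  qed
  ultimately have "card (mono_maps z) \<le> card (Pow {..<2 * z})"
    by (rule card_inj_on_le) auto
  then show ?thesis by (simp add: card_Pow power_mult)
qed

definition budgets :: "nat \<Rightarrow> (nat \<Rightarrow> nat) set" where
  "budgets d = {n \<in> {..<d} \<rightarrow>\<^sub>E {..2 * d}. (\<Sum>k<d. n k) \<le> 2 * d}"

lemma finite_budgets: "finite (budgets d)"
  unfolding budgets_def by (rule finite_subset[of _ "{..<d} \<rightarrow>\<^sub>E {..2 * d}"]) (auto intro: finite_PiE)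

text \<open>Stars and bars: the partial sums \<open>k + n 0 + \<dots> + n k\<close> encode \<open>n\<close> injectively as a subset
  of \<open>{..<3d}\<close>, just as \<open>j + f j\<close> encodes a monotone map \<open>f\<close> as a subset of \<open>{..<2z}\<close>.\<close>

lemma card_budgets_le: "card (budgets d) \<le> 8 ^ d"
proof -
  let ?psum = "\<lambda>n k. k + (\<Sum>l\<le>k. n l)"
  let ?code = "\<lambda>n. ?psum n ` {..<d}"
  have strict: "strict_mono_on {..<d} (?psum n)" for n
    by (intro strict_mono_onI add_less_le_mono sum_mono2) auto
  have "inj_on ?code (budgets d)"
  proof
    fix n n' assume n: "n \<in> budgets d" and n': "n' \<in> budgets d" and eq: "?code n = ?code n'"
    have psum_eq: "?psum n k = ?psum n' k" if "k < d" for k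
      using strict_mono_on_lessThan_eq_if_image_eq[OF strict strict eq that] .
    have "n k = n' k" if "k < d" for k
    proof (cases k)
      case 0 then show ?thesis using psum_eq[OF that] by simp
    next
      case (Suc l) then show ?thesis using psum_eq[OF that] psum_eq[of l] that by simp
    qed
    then show "n = n'" using n n' unfolding budgets_def by (auto intro!: PiE_ext[of n "{..<d}" _ n'])
  qed
  moreover have "?code ` budgets d \<subseteq> Pow {..<3 * d}"
  proof clarify
    fix n k assume "n \<in> budgets d" "k < d"
    moreover have "(\<Sum>l\<le>k. n l) \<le> (\<Sum>l<d. n l)" using \<open>k < d\<close> by (intro sum_mono2) auto
    ultimately show "?psum n k < 3 * d" unfolding budgets_def by simp
  qed
  ultimately have "card (budgets d) \<le> card (Pow {..<3 * d})"
    by (rule card_inj_on_le) auto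
  then show ?thesis by (simp add: card_Pow power_mult)
qed

definition multipliers :: "nat \<Rightarrow> (nat \<Rightarrow> int) set" where
  "multipliers d = {..<d} \<rightarrow>\<^sub>E {-3..3}"

lemma card_multipliers: "card (multipliers d) = 7 ^ d"
  unfolding multipliers_def by (simp add: card_PiE)

lemma finite_multipliers: "finite (multipliers d)"
  unfolding multipliers_def by (auto intro: finite_PiE)

section \<open>Adaptive grids\<close>

lemma round_to_multiple:
  fixes x h :: real
  assumes "0 < h" "x^2 \<le> 6 * h^2"
  shows "\<bar>round (x / h)\<bar> \<le> 3" and "(x - of_int (round (x / h)) * h)^2 \<le> h^2 / 4"
proof -
  have err: "\<bar>x / h - of_int (round (x / h))\<bar> \<le> 1/2"
    using of_int_round_abs_le[of "x / h"] by (simp add: abs_minus_commute)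
  have "(x / h)^2 = x^2 / h^2" by (simp add: power_divide)
  also have "\<dots> \<le> 6" using assms by (simp add: divide_le_eq)
  also have "(6::real) \<le> (5/2)^2" by (simp add: power2_eq_square)
  finally have "\<bar>x / h\<bar> \<le> \<bar>5/2\<bar>" by (simp only: abs_le_square_iff)
  with err show "\<bar>round (x / h)\<bar> \<le> 3" by linarith
  have "x - of_int (round (x / h)) * h = h * (x / h - of_int (round (x / h)))"
    using assms(1) by (simp add: field_simps)
  then have "(x - of_int (round (x / h)) * h)^2 = h^2 * \<bar>x / h - of_int (round (x / h))\<bar>^2"
    by (simp add: power_mult_distrib)
  also have "\<dots> \<le> h^2 * (1/2)^2"
    using err by (intro mult_left_mono power_mono) auto
  finally show "(x - of_int (round (x / h)) * h)^2 \<le> h^2 / 4" by (simp add: power2_eq_square)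
qed

definition grid_step :: "real \<Rightarrow> nat \<Rightarrow> nat \<Rightarrow> real" where
  "grid_step r d n = r * sqrt ((real n + 1) / (6 * real d))"

definition grid_vector :: "real \<Rightarrow> nat \<Rightarrow> (nat \<Rightarrow> nat) \<times> (nat \<Rightarrow> int) \<Rightarrow> nat \<Rightarrow> real" where
  "grid_vector r d nm k = of_int (snd nm k) * grid_step r d (fst nm k)"

lemma grid_step_squared:
  "0 < d \<Longrightarrow> 0 < r \<Longrightarrow> (grid_step r d n)^2 = r^2 * (real n + 1) / (6 * real d)"
  unfolding grid_step_def by (simp add: power_mult_distrib)

definition grid_budget :: "real \<Rightarrow> nat \<Rightarrow> (nat \<Rightarrow> real) \<Rightarrow> nat \<Rightarrow> nat" where
  "grid_budget r d v = (\<lambda>k\<in>{..<d}. nat \<lceil>real d * (v k)^2 / r^2\<rceil>)"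

lemma sum_grid_budget_le:
  assumes "0 < r" "(\<Sum>k<d. (v k)^2) \<le> r^2"
  shows "(\<Sum>k<d. real (grid_budget r d v k)) \<le> 2 * real d"
proof -
  have "real (grid_budget r d v k) \<le> real d / r^2 * (v k)^2 + 1" if "k < d" for k
    using that unfolding grid_budget_def by (simp add: of_nat_nat)
  then have "(\<Sum>k<d. real (grid_budget r d v k)) \<le> (\<Sum>k<d. real d / r^2 * (v k)^2 + 1)"
    by (intro sum_mono) auto
  also have "\<dots> = real d / r^2 * (\<Sum>k<d. (v k)^2) + real d"
    by (simp add: sum.distrib sum_distrib_left)
  also have "\<dots> \<le> real d / r^2 * r^2 + real d"
    using assms(2) by (intro add_right_mono mult_left_mono) auto
  finally show ?thesis using assms(1) by simp
qed

lemma grid_budget_in_budgets: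
  assumes "0 < r" "(\<Sum>k<d. (v k)^2) \<le> r^2"
  shows "grid_budget r d v \<in> budgets d"
proof -
  have "(\<Sum>k<d. grid_budget r d v k) \<le> 2 * d"
    using sum_grid_budget_le[OF assms] by (simp only: of_nat_sum[symmetric] of_nat_le_iff)
  moreover have "grid_budget r d v k \<le> 2 * d" if "k < d" for k
    using member_le_sum[of k "{..<d}" "grid_budget r d v"] that calculation by simp
  ultimately show ?thesis unfolding budgets_def by (auto simp: PiE_iff grid_budget_def)
qed

text \<open>Coordinate \<open>k\<close> of \<open>v\<close> is rounded on a grid whose mesh grows with its share
  \<open>n k \<approx> d v\<^sub>k\<^sup>2 / r\<^sup>2\<close> of the squared norm; the shares sum to at most \<open>2d\<close>, so the
  grid vectors within distance \<open>r/\<surd>8\<close> of the ball of radius \<open>r\<close> number only \<open>2\<^sup>O\<^sup>(\<^sup>d\<^sup>)\<close>.\<close>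

lemma grid_vector_approx:
  fixes v :: "nat \<Rightarrow> real"
  assumes "0 < d" "0 < r" "(\<Sum>k<d. (v k)^2) \<le> r^2"
  shows "\<exists>nm \<in> budgets d \<times> multipliers d. (\<Sum>k<d. (v k - grid_vector r d nm k)^2) \<le> r^2 / 8"
proof -
  define n where "n = grid_budget r d v"
  define h where "h k = grid_step r d (n k)" for k
  define m where "m = (\<lambda>k\<in>{..<d}. round (v k / h k))"
  have h_pos: "0 < h k" for k unfolding h_def grid_step_def using assms(1,2) by simp
  have h_sq: "(h k)^2 = r^2 * (real (n k) + 1) / (6 * real d)" for k
    unfolding h_def using assms(1,2) by (rule grid_step_squared)
  have v_sq: "(v k)^2 \<le> 6 * (h k)^2" if "k < d" for k
  proof -
    have "real d * (v k)^2 / r^2 \<le> real (n k)"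
      using that unfolding n_def grid_budget_def by (simp add: real_nat_ceiling_ge)
    then have "real d * (v k)^2 \<le> r^2 * real (n k)"
      using assms(2) by (simp add: field_simps)
    also have "\<dots> \<le> r^2 * (real (n k) + 1)" by (intro mult_left_mono) auto
    finally show ?thesis unfolding h_sq using assms(1) by (simp add: field_simps)
  qed
  have "n \<in> budgets d" unfolding n_def using grid_budget_in_budgets[OF assms(2,3)] .
  moreover have "m \<in> multipliers d"
    using round_to_multiple(1)[OF h_pos v_sq] unfolding multipliers_def m_def
    by (force simp: PiE_iff abs_le_iff)
  moreover have "(\<Sum>k<d. (v k - grid_vector r d (n, m) k)^2) \<le> r^2 / 8"
  proof -
    have "(\<Sum>k<d. (v k - grid_vector r d (n, m) k)^2) \<le> (\<Sum>k<d. (h k)^2 / 4)"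
      using round_to_multiple(2)[OF h_pos v_sq]
      by (intro sum_mono) (simp add: grid_vector_def m_def h_def)
    also have "\<dots> = (\<Sum>k<d. r^2 / (24 * real d) * (real (n k) + 1))"
      unfolding h_sq by (simp add: field_simps)
    also have "\<dots> = r^2 / (24 * real d) * ((\<Sum>k<d. real (n k)) + real d)"
      by (simp only: sum_distrib_left[symmetric] sum.distrib) simp
    also have "\<dots> \<le> r^2 / (24 * real d) * (3 * real d)"
      using sum_grid_budget_le[OF assms(2,3)] unfolding n_def by (intro mult_left_mono) auto
    also have "\<dots> = r^2 / 8" using assms(1) by simp
    finally show ?thesis .
  qed
  ultimately show ?thesis by blast
qed

section \<open>The upper bound\<close>

lemma dfrechet_le_imp_mono_matching:
  assumes "length P = z" "length Q = z" "0 < z" "dfrechet P Q \<le> r"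
  shows "\<exists>f \<in> mono_maps z. \<forall>j<z. euclid_dist (P ! f j) (Q ! j) \<le> r"
proof -
  have "P \<noteq> []" "Q \<noteq> []" using assms(1-3) by auto
  then obtain T where T: "is_traversal z z T" and cost: "\<forall>(i, j)\<in>set T. euclid_dist (P!i) (Q!j) \<le> r"
    using assms(1,2,4) dfrechet_le_iff by metis
  define f where "f = (\<lambda>j\<in>{..<z}. LEAST i. (i, j) \<in> set T)"
  have f_in: "(f j, j) \<in> set T" if "j < z" for j
    using is_traversal_covers_snd[OF T that] that unfolding f_def by (auto intro: LeastI_ex)
  have f_less: "f j < z" if "j < z" for j
    using is_traversal_set_bounds[OF T f_in[OF that]] assms(3) by simp
  have "f j \<le> f j'" if j: "j \<in> {..<z}" and j': "j' \<in> {..<z}" and "j \<le> j'" for j j'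
  proof -
    obtain s where s: "s < length T" "T!s = (f j', j')"
      using f_in[of j'] j' by (auto simp: in_set_conv_nth)
    then obtain a where a: "a \<le> s" "snd (T!a) = j"
      using is_traversal_snd_attains[OF T s(1), of j] \<open>j \<le> j'\<close> by auto
    then have "(fst (T!a), j) \<in> set T" using s(1) by (metis le_less_trans nth_mem prod.collapse)
    then have "f j \<le> fst (T!a)" using j unfolding f_def by (auto intro: Least_le)
    also have "\<dots> \<le> fst (T!s)" using is_traversal_mono[OF T a(1) s(1)] by simp
    finally show ?thesis using s(2) by simp
  qed
  then have "f \<in> mono_maps z" unfolding mono_maps_def f_def using f_less
    by (auto intro: mono_onI simp: f_def)
  moreover have "euclid_dist (P ! f j) (Q ! j) \<le> r" if "j < z" for j
    using cost f_in[OF that] by auto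
  ultimately show ?thesis by blast
qed

text \<open>Shifting a center point by one bit lets consecutive vertices of a center curve be made
  distinct, so that its zero-distance class is a singleton.\<close>

primrec separating_bits :: "(nat \<Rightarrow> bool \<Rightarrow> 'a) \<Rightarrow> nat \<Rightarrow> bool" where
  "separating_bits p 0 = False"
| "separating_bits p (Suc j) = (p (Suc j) False = p j (separating_bits p j))"

lemma separating_bits_distinct:
  assumes "\<And>j. p j True \<noteq> p j False"
  shows "p (Suc j) (separating_bits p (Suc j)) \<noteq> p j (separating_bits p j)"
  using assms[of "Suc j"] by (cases "p (Suc j) False = p j (separating_bits p j)") auto

definition center_point ::
    "real list \<Rightarrow> real \<Rightarrow> nat \<Rightarrow> (nat \<Rightarrow> nat) \<times> (nat \<Rightarrow> int) \<Rightarrow> bool \<Rightarrow> real list" where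
  "center_point p r d nm \<beta> =
    map (\<lambda>k. p!k + grid_vector r d nm k + (if k = 0 \<and> \<beta> then r/8 else 0)) [0..<d]"

lemma center_point_bit_distinct:
  assumes "0 < d" "0 < r"
  shows "center_point p r d nm True \<noteq> center_point p r d nm False"
proof
  assume "center_point p r d nm True = center_point p r d nm False"
  then have "center_point p r d nm True ! 0 = center_point p r d nm False ! 0" by simp
  then show False using assms unfolding center_point_def by simp
qed

lemma center_point_close:
  assumes "0 < d" "0 < r" "length q = d"
    and approx: "(\<Sum>k<d. (q!k - p!k - grid_vector r d nm k)^2) \<le> r^2 / 8"
  shows "euclid_dist (center_point p r d nm \<beta>) q \<le> r/2"
proof -
  let ?c = "center_point p r d nm"
  have len: "length (?c \<beta>) = d" "length (?c False) = d" unfolding center_point_def by auto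
  have "euclid_dist (?c \<beta>) (?c False) = sqrt (\<Sum>k<d. (if k = 0 then (if \<beta> then r/8 else 0)^2 else 0))"
    unfolding euclid_dist_def len
    by (intro arg_cong[where f = sqrt] sum.cong) (auto simp: center_point_def)
  also have "\<dots> = (if \<beta> then r/8 else 0)" using assms(1,2) by simp
  finally have shift: "euclid_dist (?c \<beta>) (?c False) \<le> r/8" using assms(2) by simp
  have "(euclid_dist (?c False) q)^2 = (\<Sum>k<d. (?c False ! k - q!k)^2)"
    unfolding euclid_dist_def len by (simp add: sum_nonneg)
  also have "\<dots> = (\<Sum>k<d. (q!k - p!k - grid_vector r d nm k)^2)"
  proof (intro sum.cong refl)
    fix k assume "k \<in> {..<d}"
    then have "?c False ! k - q!k = - (q!k - p!k - grid_vector r d nm k)"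
      unfolding center_point_def by simp
    then show "(?c False ! k - q!k)^2 = (q!k - p!k - grid_vector r d nm k)^2"
      by (simp only: power2_minus)
  qed
  also have "\<dots> \<le> r^2 / 8" by (rule approx)
  also have "\<dots> \<le> (3 * r/8)^2"
    using zero_le_power2[of r] unfolding power_divide power_mult_distrib by simp
  finally have "euclid_dist (?c False) q \<le> 3 * r/8"
    by (rule power2_le_imp_le) (use assms(2) in simp)
  moreover have "euclid_dist (?c \<beta>) q \<le> euclid_dist (?c \<beta>) (?c False) + euclid_dist (?c False) q"
    using len assms(3) by (intro euclid_dist_triangle) auto
  ultimately show ?thesis using shift by linarith
qed

definition net_choices :: "nat \<Rightarrow> nat \<Rightarrow> (nat \<Rightarrow> (nat \<Rightarrow> nat) \<times> (nat \<Rightarrow> int)) set" where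
  "net_choices d z = {..<z} \<rightarrow>\<^sub>E (budgets d \<times> multipliers d)"

definition bit_choices :: "nat \<Rightarrow> (nat \<Rightarrow> bool) set" where
  "bit_choices z = {..<z} \<rightarrow>\<^sub>E UNIV"

definition center_curve :: "real list list \<Rightarrow> real \<Rightarrow> nat \<Rightarrow> nat \<Rightarrow> (nat \<Rightarrow> nat) \<Rightarrow>
    (nat \<Rightarrow> (nat \<Rightarrow> nat) \<times> (nat \<Rightarrow> int)) \<Rightarrow> (nat \<Rightarrow> bool) \<Rightarrow> real list list" where
  "center_curve P r d z f \<nu> b = map (\<lambda>j. center_point (P ! f j) r d (\<nu> j) (b j)) [0..<z]"

lemma center_curve_in_curves: "center_curve P r d z f \<nu> b \<in> curves d z"
  unfolding center_curve_def center_point_def curves_def by auto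

lemma finite_center_parameters: "finite (mono_maps z \<times> net_choices d z \<times> bit_choices z)"
  unfolding net_choices_def bit_choices_def
  by (intro finite_cartesian_product finite_mono_maps finite_PiE finite_budgets finite_multipliers)
    auto

lemma card_center_parameters_le:
  assumes "0 < d"
  shows "card (mono_maps z \<times> net_choices d z \<times> bit_choices z) \<le> 2 ^ (9 * d * z)"
proof -
  have "card (net_choices d z) = (card (budgets d) * 7 ^ d) ^ z"
    by (simp add: net_choices_def card_PiE card_cartesian_product card_multipliers)
  also have "\<dots> \<le> (8 ^ d * 7 ^ d) ^ z"
    using card_budgets_le by (intro power_mono mult_right_mono) auto
  finally have nets: "card (net_choices d z) \<le> (8 ^ d * 7 ^ d) ^ z" .
  have "card (mono_maps z \<times> net_choices d z \<times> bit_choices z)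
      = card (mono_maps z) * card (net_choices d z) * 2 ^ z"
    by (simp add: card_cartesian_product bit_choices_def card_PiE)
  also have "\<dots> \<le> 4 ^ z * (8 ^ d * 7 ^ d) ^ z * 2 ^ z"
    using card_mono_maps_le nets by (intro mult_mono) auto
  also have "\<dots> = (4 * 2) ^ z * (8 * 7) ^ (d * z)"
    unfolding power_mult_distrib power_mult by (simp only: ac_simps)
  also have "\<dots> \<le> 8 ^ (d * z) * 64 ^ (d * z)"
    using assms by (intro mult_mono power_increasing power_mono) auto
  also have "\<dots> = (2 ^ 9) ^ (d * z)"
    unfolding power_mult_distrib[symmetric] by simp
  also have "\<dots> = 2 ^ (9 * d * z)"
    by (simp only: power_mult[symmetric] mult.assoc)
  finally show ?thesis .
qed

lemma exists_net_choice:
  assumes "0 < d" "0 < r" and P: "P \<in> curves d z" and Q: "Q \<in> curves d z"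
    and f_less: "\<And>j. j < z \<Longrightarrow> f j < z" and match: "\<And>j. j < z \<Longrightarrow> euclid_dist (P ! f j) (Q ! j) \<le> r"
  shows "\<exists>\<nu> \<in> net_choices d z. \<forall>j<z. (\<Sum>k<d. (Q!j!k - P!(f j)!k - grid_vector r d (\<nu> j) k)^2) \<le> r^2 / 8"
proof -
  have "\<forall>j\<in>{..<z}. \<exists>nm. nm \<in> budgets d \<times> multipliers d \<and>
      (\<Sum>k<d. (Q!j!k - P!(f j)!k - grid_vector r d nm k)^2) \<le> r^2 / 8"
  proof
    fix j assume "j \<in> {..<z}"
    then have j: "j < z" by simp
    have "sqrt (\<Sum>k<d. (P!(f j)!k - Q!j!k)^2) \<le> r"
      using match[OF j] curves_nth_length[OF P f_less[OF j]] by (simp add: euclid_dist_def)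
    then have "(\<Sum>k<d. (Q!j!k - P!(f j)!k)^2) \<le> r^2"
      by (simp add: power2_commute sqrt_le_D)
    from grid_vector_approx[OF assms(1,2) this] show "\<exists>nm. nm \<in> budgets d \<times> multipliers d \<and>
        (\<Sum>k<d. (Q!j!k - P!(f j)!k - grid_vector r d nm k)^2) \<le> r^2 / 8" by blast
  qed
  from bchoice[OF this] obtain \<nu> where \<nu>: "\<forall>j\<in>{..<z}. \<nu> j \<in> budgets d \<times> multipliers d \<and>
      (\<Sum>k<d. (Q!j!k - P!(f j)!k - grid_vector r d (\<nu> j) k)^2) \<le> r^2 / 8" ..
  then have "restrict \<nu> {..<z} \<in> net_choices d z" unfolding net_choices_def by auto
  with \<nu> show ?thesis by (intro bexI[of _ "restrict \<nu> {..<z}"]) auto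
qed

lemma exists_center_curve:
  assumes "0 < d" "0 < z" "0 < r" and P: "P \<in> curves d z" and Q: "Q \<in> curves d z"
    and "dfrechet P Q \<le> r"
  shows "\<exists>f \<in> mono_maps z. \<exists>\<nu> \<in> net_choices d z. \<exists>b \<in> bit_choices z.
    (\<forall>j. Suc j < z \<longrightarrow> center_curve P r d z f \<nu> b ! j \<noteq> center_curve P r d z f \<nu> b ! Suc j) \<and>
    dfrechet (center_curve P r d z f \<nu> b) Q \<le> r/2"
proof -
  obtain f where f: "f \<in> mono_maps z" and match: "\<And>j. j < z \<Longrightarrow> euclid_dist (P ! f j) (Q ! j) \<le> r"
    using dfrechet_le_imp_mono_matching[OF curves_length[OF P] curves_length[OF Q] assms(2,6)] by blast
  have "f j < z" if "j < z" for j using f that unfolding mono_maps_def by auto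
  then obtain \<nu> where \<nu>: "\<nu> \<in> net_choices d z"
    and approx: "\<And>j. j < z \<Longrightarrow> (\<Sum>k<d. (Q!j!k - P!(f j)!k - grid_vector r d (\<nu> j) k)^2) \<le> r^2 / 8"
    using exists_net_choice[OF assms(1,3) P Q _ match] by blast
  define pt where "pt j = center_point (P ! f j) r d (\<nu> j)" for j
  define b where "b = restrict (separating_bits pt) {..<z}"
  have nth: "center_curve P r d z f \<nu> b ! j = pt j (separating_bits pt j)" if "j < z" for j
    using that unfolding center_curve_def pt_def b_def by simp
  have "b \<in> bit_choices z" unfolding bit_choices_def b_def by simp
  moreover have "center_curve P r d z f \<nu> b ! j \<noteq> center_curve P r d z f \<nu> b ! Suc j"
    if "Suc j < z" for j
  proof -
    have "pt (Suc j) (separating_bits pt (Suc j)) \<noteq> pt j (separating_bits pt j)"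
      by (rule separating_bits_distinct) (simp add: pt_def center_point_bit_distinct[OF assms(1,3)])
    then show ?thesis using nth[of j] nth[of "Suc j"] that by simp
  qed
  moreover have "dfrechet (center_curve P r d z f \<nu> b) Q \<le> r/2"
  proof (rule dfrechet_le_pointwise)
    show "length Q = length (center_curve P r d z f \<nu> b)" "center_curve P r d z f \<nu> b \<noteq> []"
      using curves_length[OF Q] assms(2) by (auto simp: center_curve_def)
    fix j assume "j < length (center_curve P r d z f \<nu> b)"
    then have "j < z" by (simp add: center_curve_def)
    have "euclid_dist (pt j \<beta>) (Q ! j) \<le> r/2" for \<beta>
      unfolding pt_def
      by (intro center_point_close[OF assms(1,3) curves_nth_length[OF Q \<open>j < z\<close>]] approx[OF \<open>j < z\<close>])
    then show "euclid_dist (center_curve P r d z f \<nu> b ! j) (Q ! j) \<le> r/2"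
      by (simp only: nth[OF \<open>j < z\<close>])
  qed
  ultimately show ?thesis using f \<nu> by blast
qed

lemma exists_center_class:
  assumes "0 < d" "0 < z" "0 < r" and P: "P \<in> curves d z" and y: "y \<in> frechet_classes d z"
    and "dfrechet P (SOME Q. Q \<in> y) \<le> r"
  shows "\<exists>f \<nu> b. (f, \<nu>, b) \<in> mono_maps z \<times> net_choices d z \<times> bit_choices z \<and>
    class_dist (frechet_class d z (center_curve P r d z f \<nu> b)) y \<le> r/2"
proof -
  obtain f \<nu> b where params: "(f, \<nu>, b) \<in> mono_maps z \<times> net_choices d z \<times> bit_choices z"
    and distinct:
      "\<And>j. Suc j < z \<Longrightarrow> center_curve P r d z f \<nu> b ! j \<noteq> center_curve P r d z f \<nu> b ! Suc j"
    and close: "dfrechet (center_curve P r d z f \<nu> b) (SOME Q. Q \<in> y) \<le> r/2"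
    using exists_center_curve[OF assms(1-3) P frechet_classes_representative[OF y assms(2)] assms(6)]
    by blast
  have "frechet_class d z (center_curve P r d z f \<nu> b) = {center_curve P r d z f \<nu> b}"
    using frechet_class_eq_singleton[OF center_curve_in_curves assms(2) distinct] .
  then have "class_dist (frechet_class d z (center_curve P r d z f \<nu> b)) y \<le> r/2"
    using close unfolding class_dist_def by simp
  with params show ?thesis by blast
qed

lemma doubling_ok_frechet_classes:
  assumes "0 < d" "0 < z"
  shows "doubling_ok (frechet_classes d z) class_dist (9 * d * z)"
  unfolding doubling_ok_def
proof (intro ballI allI impI)
  fix x and r :: real assume x: "x \<in> frechet_classes d z" and "0 < r"
  let ?S = "frechet_classes d z"
  define P where "P = (SOME P. P \<in> x)"
  have P: "P \<in> curves d z" unfolding P_def using frechet_classes_representative[OF x assms(2)] .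
  define C where "C = (\<lambda>(f, \<nu>, b). frechet_class d z (center_curve P r d z f \<nu> b)) `
    (mono_maps z \<times> net_choices d z \<times> bit_choices z)"
  have "finite C" unfolding C_def using finite_center_parameters by simp
  moreover have "C \<subseteq> ?S" unfolding C_def
    using frechet_class_in_frechet_classes[OF center_curve_in_curves] by auto
  moreover have "real (card C) \<le> 2 powr real (9 * d * z)"
  proof -
    have "card C \<le> 2 ^ (9 * d * z)"
      unfolding C_def
      using card_image_le[OF finite_center_parameters] card_center_parameters_le[OF assms(1)]
      by (rule le_trans)
    then have "real (card C) \<le> 2 ^ (9 * d * z)" by (metis of_nat_le_iff of_nat_numeral of_nat_power)
    also have "\<dots> = 2 powr real (9 * d * z)" by (rule powr_realpow[symmetric]) simp
    finally show ?thesis .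
  qed
  moreover have "cball_in ?S class_dist x r \<subseteq> (\<Union>c\<in>C. cball_in ?S class_dist c (r/2))"
  proof
    fix y assume "y \<in> cball_in ?S class_dist x r"
    then have y: "y \<in> ?S" and "dfrechet P (SOME Q. Q \<in> y) \<le> r"
      unfolding cball_in_def class_dist_def P_def by auto
    then obtain f \<nu> b where "(f, \<nu>, b) \<in> mono_maps z \<times> net_choices d z \<times> bit_choices z"
      and "class_dist (frechet_class d z (center_curve P r d z f \<nu> b)) y \<le> r/2"
      using exists_center_class[OF assms \<open>0 < r\<close> P] by blast
    then show "y \<in> (\<Union>c\<in>C. cball_in ?S class_dist c (r/2))"
      unfolding cball_in_def C_def using y by force
  qed
  ultimately show "\<exists>C. finite C \<and> C \<subseteq> ?S \<and> real (card C) \<le> 2 powr real (9 * d * z) \<and>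
      cball_in ?S class_dist x r \<subseteq> (\<Union>c\<in>C. cball_in ?S class_dist c (r/2))" by blast
qed

lemma doubling_dim_le: "0 \<le> t \<Longrightarrow> doubling_ok S \<delta> t \<Longrightarrow> doubling_dim S \<delta> \<le> ereal t"
  unfolding doubling_dim_def by (auto intro: Inf_lower)

lemma doubling_dim_ge: "(\<And>t. 0 \<le> t \<Longrightarrow> doubling_ok S \<delta> t \<Longrightarrow> a \<le> t) \<Longrightarrow> ereal a \<le> doubling_dim S \<delta>"
  unfolding doubling_dim_def by (auto intro: Inf_greatest)

theorem proposition9p1:
  shows "\<exists>c1 c2 :: real. c1 > 0 \<and> c2 > 0 \<and>
    (\<forall>d z :: nat. d \<ge> 1 \<longrightarrow> z \<ge> 1 \<longrightarrow>
       ereal (c1 * real d * real z) \<le> doubling_dim (frechet_classes d z) class_dist \<and>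
       doubling_dim (frechet_classes d z) class_dist \<le> ereal (c2 * real d * real z))"
proof (intro exI conjI allI impI)
  fix d z :: nat assume "d \<ge> 1" "z \<ge> 1"
  then have pos: "0 < d" "0 < z" by auto
  show "ereal (1/8 * real d * real z) \<le> doubling_dim (frechet_classes d z) class_dist"
    using doubling_ok_frechet_classes_imp_ge[OF pos] by (intro doubling_dim_ge) simp
  show "doubling_dim (frechet_classes d z) class_dist \<le> ereal (9 * real d * real z)"
    using doubling_dim_le[OF _ doubling_ok_frechet_classes[OF pos]] by simp
qed simp_all

end
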